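(* Let $a, r \in \mathbb{R}$ with $a > r > 0$, and let $\digamma$ be the anchor ring in $\mathbb{E}^{3}$ parametrized by $\boldsymbol{x}(t,\varphi) = \big((a + r\cos t)\cos\varphi,\ (a + r\cos t)\sin\varphi,\ r\sin t\big)$. Then the Gauss map $\boldsymbol{n}$ of $\digamma$ is of infinite type with respect to the first fundamental form; that is, there is no integer $m \geq 1$ and no real numbers $c_{1}, \dots, c_{m}$ such that $(\Delta^{I})^{m}\boldsymbol{n} + c_{1}(\Delta^{I})^{m-1}\boldsymbol{n} + \cdots + c_{m-1}\Delta^{I}\boldsymbol{n} + c_{m}\boldsymbol{n} = \mathbf{0}$.
   Context: An anchor ring is a tube in $\mathbb{E}^3$ of constant radius $r$ around a plane circle (or an open portion of a plane circle) of radius $a>r$. With $\gamma = a + r\cos t$, its first fundamental form is $I = r^{2}dt^{2} + \gamma^{2}d\varphi^{2}$, and its Gauss map is $\boldsymbol{n} = (-\cos t\cos\varphi, -\cos t\sin\varphi, -\sin t)$. For a surface with first fundamental form $I = g_{ij}du^{i}du^{j}$, the Beltrami–Laplace operator is $\Delta^{I} f = -\frac{1}{\sqrt{g}}\big(\sqrt{g}\, g^{ij} f_{i}\big)_{j}$, where $g = \det(g_{ij})$ and $(g^{ij})$ is the inverse of $(g_{ij})$; for the anchor ring this is $\Delta^{I} = -\frac{1}{\gamma^{2}}\frac{\partial^{2}}{\partial\varphi^{2}} + \frac{\sin t}{r\gamma}\frac{\partial}{\partial t} - \frac{1}{r^{2}}\frac{\partial^{2}}{\partial t^{2}}$, applied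 componentwise to vector-valued maps. A vector-valued map $\boldsymbol{n}$ on the surface is of finite type if $\boldsymbol{n} = \boldsymbol{c} + \sum_{i=1}^{k}\boldsymbol{n}_{i}$ for a constant vector $\boldsymbol{c}$ and finitely many nonconstant eigenvectors $\boldsymbol{n}_i$ of $\Delta^{I}$; otherwise it is of infinite type. The paper uses the criterion that finite type implies a relation of the form $(\Delta^{I})^{m}\boldsymbol{n} + c_{1}(\Delta^{I})^{m-1}\boldsymbol{n} + \cdots + c_{m}\boldsymbol{n} = \mathbf{0}$. *)

theory Defs
  imports "HOL-Analysis.Analysis"
begin

definition anchor_gamma :: "real \<Rightarrow> real \<Rightarrow> real \<Rightarrow> real" where
  "anchor_gamma a r t = a + r * cos t"

definition anchor_ring :: "real \<Rightarrow> real \<Rightarrow> real \<Rightarrow> real \<Rightarrow> real^3" where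
  "anchor_ring a r t phi = vector [(a + r * cos t) * cos phi, (a + r * cos t) * sin phi, r * sin t]"

definition anchor_gauss :: "real \<Rightarrow> real \<Rightarrow> real^3" where
  "anchor_gauss t phi = vector [- cos t * cos phi, - cos t * sin phi, - sin t]"

text \<open>Beltrami--Laplace operator of the first fundamental form
  I = r^2 dt^2 + gamma^2 dphi^2 on scalar functions.\<close>
definition anchor_lap :: "real \<Rightarrow> real \<Rightarrow> (real \<Rightarrow> real \<Rightarrow> real) \<Rightarrow> real \<Rightarrow> real \<Rightarrow> real" where
  "anchor_lap a r f t phi =
     - (1 / (anchor_gamma a r t)\<^sup>2) * deriv (\<lambda>q. deriv (\<lambda>p. f t p) q) phi
     + (sin t / (r * anchor_gamma a r t)) * deriv (\<lambda>s. f s phi) t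
     - (1 / r\<^sup>2) * deriv (\<lambda>s. deriv (\<lambda>u. f u phi) s) t"

definition anchor_lapV :: "real \<Rightarrow> real \<Rightarrow> (real \<Rightarrow> real \<Rightarrow> real^3) \<Rightarrow> real \<Rightarrow> real \<Rightarrow> real^3" where
  "anchor_lapV a r F t phi = (\<chi> i. anchor_lap a r (\<lambda>s p. F s p $ i) t phi)"

end

theory Submission
  imports Defs "HOL-Computational_Algebra.Polynomial"
begin

text \<open>Only the third component -sin t of the Gauss map matters. The Laplacian maps
  sin t p(cos t) / \<gamma>^n to a function of the same shape with exponent n + 2, so
  (\<Delta>^I)^k (-sin t) = sin t R_k(cos t) / \<gamma>^(2k-1) for polynomials R_k. Clearing
  denominators in a finite-type relation of order m gives a polynomial identity
  R_m + \<gamma> S = 0 in x = cos t on (-1,1), hence everywhere. At the zero x = -a/r of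
  \<gamma> = a + r x this says R_m(-a/r) = 0; but the recursion for R_k multiplies the value
  at -a/r by (2k-1)^2 ((a/r)^2 - 1) \<noteq> 0 at each step.\<close>

lemma anchor_gamma_pos:
  assumes "\<bar>r\<bar> < a"
  shows "anchor_gamma a r t > 0"
proof -
  have "\<bar>r * cos t\<bar> \<le> \<bar>r\<bar>"
    by (simp add: abs_mult mult_left_le)
  then show ?thesis
    using assms by (simp add: anchor_gamma_def)
qed

lemma has_real_derivative_poly_cos:
  "((\<lambda>s. poly p (cos s)) has_real_derivative - sin s * poly (pderiv p) (cos s)) (at s within S)"
  by (auto intro!: derivative_eq_intros DERIV_chain2[OF poly_DERIV, THEN has_field_derivative_at_within])

lemma has_real_derivative_power_nonzero:
  assumes "(f has_real_derivative D) (at s)" and "f s \<noteq> 0"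
  shows "((\<lambda>s. f s ^ n) has_real_derivative real n * D * f s ^ n / f s) (at s)"
proof -
  have "real n * D * f s ^ (n - Suc 0) = real n * D * f s ^ n / f s"
    using assms(2) by (cases n) auto
  then show ?thesis
    using DERIV_power[OF assms(1), of n] by (simp add: mult.assoc)
qed

lemma has_real_derivative_anchor_gamma_power:
  assumes "anchor_gamma a r s \<noteq> 0"
  shows "((\<lambda>s. anchor_gamma a r s ^ n) has_real_derivative
           - real n * r * sin s * anchor_gamma a r s ^ n / anchor_gamma a r s) (at s)"
proof -
  have "(anchor_gamma a r has_real_derivative - r * sin s) (at s)"
    unfolding anchor_gamma_def[abs_def] by (auto intro!: derivative_eq_intros)
  from has_real_derivative_power_nonzero[OF this assms] show ?thesis
    by (simp add: mult.assoc)
qed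

definition sin_poly_quot :: "real \<Rightarrow> real \<Rightarrow> real poly \<Rightarrow> nat \<Rightarrow> real \<Rightarrow> real \<Rightarrow> real" where
  "sin_poly_quot a r p n t phi = sin t * poly p (cos t) / anchor_gamma a r t ^ n"

definition gamma_poly :: "real \<Rightarrow> real \<Rightarrow> real poly" where
  "gamma_poly a r = [:a, r:]"

text \<open>The numerator of the t-derivative of sin_poly_quot, written in x = cos t
  using sin^2 t = 1 - x^2.\<close>
definition dt_poly :: "real \<Rightarrow> real \<Rightarrow> real poly \<Rightarrow> nat \<Rightarrow> real poly" where
  "dt_poly a r p n =
     ([:0, 1:] * p - [:1, 0, -1:] * pderiv p) * gamma_poly a r + smult (real n * r) ([:1, 0, -1:] * p)"

definition lap_poly :: "real \<Rightarrow> real \<Rightarrow> real poly \<Rightarrow> nat \<Rightarrow> real poly" where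
  "lap_poly a r p n =
     smult (1 / r\<^sup>2) (pderiv (dt_poly a r p n) * gamma_poly a r - smult (real n * r) (dt_poly a r p n))"

lemma poly_gamma_poly: "poly (gamma_poly a r) x = a + r * x"
  by (simp add: gamma_poly_def)

lemma poly_gamma_poly_cos [simp]: "poly (gamma_poly a r) (cos t) = anchor_gamma a r t"
  by (simp add: gamma_poly_def anchor_gamma_def)

lemma poly_dt_poly:
  "poly (dt_poly a r p n) x =
     (x * poly p x - (1 - x\<^sup>2) * poly (pderiv p) x) * (a + r * x) + real n * r * (1 - x\<^sup>2) * poly p x"
  by (simp add: dt_poly_def poly_gamma_poly algebra_simps power2_eq_square)

lemma poly_lap_poly:
  "poly (lap_poly a r p n) x =
     (poly (pderiv (dt_poly a r p n)) x * (a + r * x) - real n * r * poly (dt_poly a r p n) x) / r\<^sup>2"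
  by (simp add: lap_poly_def poly_gamma_poly field_simps)

lemma has_real_derivative_sin_poly_quot:
  assumes "anchor_gamma a r s \<noteq> 0"
  shows "((\<lambda>s. sin_poly_quot a r p n s phi) has_real_derivative
           poly (dt_poly a r p n) (cos s) / anchor_gamma a r s ^ Suc n) (at s)"
  unfolding sin_poly_quot_def
proof (rule DERIV_divide[OF DERIV_mult[OF DERIV_sin has_real_derivative_poly_cos]
      has_real_derivative_anchor_gamma_power[OF assms], THEN DERIV_cong])
  show "anchor_gamma a r s ^ n \<noteq> 0"
    using assms by simp
  have cos_sq: "1 - (cos s)\<^sup>2 = (sin s)\<^sup>2"
    by (simp add: sin_squared_eq)
  show "((cos s * poly p (cos s) + - sin s * poly (pderiv p) (cos s) * sin s) * anchor_gamma a r s ^ n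
        - sin s * poly p (cos s) * (- real n * r * sin s * anchor_gamma a r s ^ n / anchor_gamma a r s))
        / (anchor_gamma a r s ^ n * anchor_gamma a r s ^ n)
      = poly (dt_poly a r p n) (cos s) / anchor_gamma a r s ^ Suc n"
    using assms unfolding poly_dt_poly cos_sq anchor_gamma_def[symmetric]
    by (simp add: field_simps power2_eq_square)
qed

lemma has_real_derivative_poly_cos_quot:
  assumes "anchor_gamma a r s \<noteq> 0"
  shows "((\<lambda>s. poly q (cos s) / anchor_gamma a r s ^ n) has_real_derivative
           sin s * (real n * r * poly q (cos s) - poly (pderiv q) (cos s) * anchor_gamma a r s)
             / anchor_gamma a r s ^ Suc n) (at s)"
  by (rule DERIV_divide[OF has_real_derivative_poly_cos
        has_real_derivative_anchor_gamma_power[OF assms], THEN DERIV_cong])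
     (use assms in \<open>auto simp: field_simps\<close>)

lemma anchor_lap_sin_poly_quot:
  assumes "\<bar>r\<bar> < a"
  shows "anchor_lap a r (sin_poly_quot a r p n) t phi = sin_poly_quot a r (lap_poly a r p n) (n + 2) t phi"
proof -
  have gamma_nz: "anchor_gamma a r s \<noteq> 0" for s
    using anchor_gamma_pos[OF assms] by (metis less_irrefl)
  have d_phi: "deriv (\<lambda>q. deriv (\<lambda>p'. sin_poly_quot a r p n t p') q) phi = 0"
    by (simp add: sin_poly_quot_def)
  have d_t: "deriv (\<lambda>u. sin_poly_quot a r p n u phi) s
      = poly (dt_poly a r p n) (cos s) / anchor_gamma a r s ^ Suc n" for s
    by (rule DERIV_imp_deriv[OF has_real_derivative_sin_poly_quot[OF gamma_nz]])
  have d_tt: "deriv (\<lambda>s. deriv (\<lambda>u. sin_poly_quot a r p n u phi) s) t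
      = sin t * (real (Suc n) * r * poly (dt_poly a r p n) (cos t)
          - poly (pderiv (dt_poly a r p n)) (cos t) * anchor_gamma a r t) / anchor_gamma a r t ^ Suc (Suc n)"
    unfolding d_t by (rule DERIV_imp_deriv[OF has_real_derivative_poly_cos_quot[OF gamma_nz]])
  show ?thesis
    using gamma_nz[of t]
    unfolding anchor_lap_def d_tt d_phi d_t
    unfolding sin_poly_quot_def poly_lap_poly anchor_gamma_def[symmetric]
    by (cases "r = 0") (simp_all add: field_simps power2_eq_square)
qed

lemma lap_poly_neg_one:
  "lap_poly a r [:-1:] 0 = gamma_poly a r * [:- a / r\<^sup>2, - 2 / r:]"
proof -
  have "poly (lap_poly a r [:-1:] 0) x = poly (gamma_poly a r * [:- a / r\<^sup>2, - 2 / r:]) x" for x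
    by (cases "r = 0")
       (simp_all add: poly_lap_poly dt_poly_def gamma_poly_def pderiv_pCons field_simps power2_eq_square)
  then show ?thesis
    by (simp add: poly_eq_poly_eq_iff[symmetric] fun_eq_iff)
qed

lemma sin_poly_quot_gamma_poly_mult:
  assumes "anchor_gamma a r t \<noteq> 0"
  shows "sin_poly_quot a r (gamma_poly a r * p) (Suc n) t phi = sin_poly_quot a r p n t phi"
  using assms by (simp add: sin_poly_quot_def anchor_gamma_def)

lemma anchor_lap_neg_sin:
  assumes "\<bar>r\<bar> < a"
  shows "anchor_lap a r (\<lambda>t phi. - sin t) = sin_poly_quot a r [:- a / r\<^sup>2, - 2 / r:] 1"
proof (intro ext)
  fix t phi
  have "(\<lambda>t phi. - sin t) = sin_poly_quot a r [:-1:] 0"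
    by (simp add: sin_poly_quot_def fun_eq_iff)
  then have "anchor_lap a r (\<lambda>t phi. - sin t) t phi = sin_poly_quot a r (lap_poly a r [:-1:] 0) 2 t phi"
    using anchor_lap_sin_poly_quot[OF assms] by (simp add: numeral_2_eq_2)
  also have "\<dots> = sin_poly_quot a r [:- a / r\<^sup>2, - 2 / r:] 1 t phi"
    unfolding lap_poly_neg_one numeral_2_eq_2 One_nat_def
    by (rule sin_poly_quot_gamma_poly_mult) (use anchor_gamma_pos[OF assms, of t] in simp)
  finally show "anchor_lap a r (\<lambda>t phi. - sin t) t phi = sin_poly_quot a r [:- a / r\<^sup>2, - 2 / r:] 1 t phi" .
qed

fun gauss_poly :: "real \<Rightarrow> real \<Rightarrow> nat \<Rightarrow> real poly" where
  "gauss_poly a r 0 = [:-1:]"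
| "gauss_poly a r (Suc 0) = [:- a / r\<^sup>2, - 2 / r:]"
| "gauss_poly a r (Suc (Suc k)) = lap_poly a r (gauss_poly a r (Suc k)) (2 * k + 1)"

text \<open>For k = 0 the truncated exponent 2 * k - 1 is 0, matching -sin t = sin t * (-1) / \<gamma>^0.\<close>
lemma anchor_lap_iterate_neg_sin:
  assumes "\<bar>r\<bar> < a"
  shows "(anchor_lap a r ^^ k) (\<lambda>t phi. - sin t) = sin_poly_quot a r (gauss_poly a r k) (2 * k - 1)"
  using assms
proof (induction a r k rule: gauss_poly.induct)
  case (1 a r)
  then show ?case by (simp add: sin_poly_quot_def fun_eq_iff)
next
  case (2 a r)
  then show ?case by (simp add: anchor_lap_neg_sin)
next
  case (3 a r k)
  have "(anchor_lap a r ^^ Suc (Suc k)) (\<lambda>t phi. - sin t)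
      = anchor_lap a r (sin_poly_quot a r (gauss_poly a r (Suc k)) (2 * k + 1))"
    using 3 by simp
  then show ?case
    using anchor_lap_sin_poly_quot[OF \<open>\<bar>r\<bar> < a\<close>] by (simp add: fun_eq_iff)
qed

lemma anchor_lapV_nth:
  "anchor_lapV a r F t phi $ i = anchor_lap a r (\<lambda>s p. F s p $ i) t phi"
  by (simp add: anchor_lapV_def)

lemma anchor_lapV_iterate_nth:
  "((anchor_lapV a r ^^ k) F) t phi $ i = ((anchor_lap a r ^^ k) (\<lambda>s p. F s p $ i)) t phi"
proof (induction k arbitrary: t phi)
  case (Suc k)
  then have "(\<lambda>s p. ((anchor_lapV a r ^^ k) F) s p $ i) = (anchor_lap a r ^^ k) (\<lambda>s p. F s p $ i)"
    by (intro ext) simp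
  then show ?case by (simp add: anchor_lapV_nth)
qed simp

lemma anchor_lapV_iterate_gauss_nth_3:
  assumes "\<bar>r\<bar> < a"
  shows "((anchor_lapV a r ^^ k) anchor_gauss) t phi $ 3 = sin_poly_quot a r (gauss_poly a r k) (2 * k - 1) t phi"
proof -
  have "(\<lambda>s p. anchor_gauss s p $ 3) = (\<lambda>s p. - sin s)"
    by (simp add: anchor_gauss_def fun_eq_iff)
  then show ?thesis
    by (simp add: anchor_lapV_iterate_nth anchor_lap_iterate_neg_sin[OF assms])
qed

text \<open>At x = -a/r the factor a + r x of dt_poly vanishes, so lap_poly acts there by a scalar.\<close>
lemma poly_lap_poly_at_gamma_root:
  assumes "r \<noteq> 0"
  shows "poly (lap_poly a r p n) (- a / r) = (real n)\<^sup>2 * ((a / r)\<^sup>2 - 1) * poly p (- a / r)"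
proof -
  have root: "a + r * (- a / r) = 0"
    using assms by simp
  show ?thesis
    unfolding poly_lap_poly poly_dt_poly root using assms
    by (simp add: field_simps power2_eq_square)
qed

lemma poly_gauss_poly_at_gamma_root:
  assumes "\<bar>r\<bar> < a" and "r \<noteq> 0"
  shows "poly (gauss_poly a r k) (- a / r) \<noteq> 0"
  using assms
proof (induction a r k rule: gauss_poly.induct)
  case (3 a r k)
  have "\<bar>r\<bar>\<^sup>2 < a\<^sup>2"
    by (rule power_strict_mono[OF \<open>\<bar>r\<bar> < a\<close> abs_ge_zero]) simp
  then have "(a / r)\<^sup>2 - 1 \<noteq> 0"
    using \<open>r \<noteq> 0\<close> by (simp add: power_divide field_simps)
  moreover have "poly (gauss_poly a r (Suc (Suc k))) (- a / r)
      = (real (2 * k + 1))\<^sup>2 * ((a / r)\<^sup>2 - 1) * poly (gauss_poly a r (Suc k)) (- a / r)"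
    by (simp only: gauss_poly.simps poly_lap_poly_at_gamma_root[OF \<open>r \<noteq> 0\<close>])
  ultimately show ?case
    using 3 by simp
qed (auto simp: field_simps power2_eq_square)

lemma sin_poly_quot_add_sum:
  assumes "anchor_gamma a r t \<noteq> 0" and "\<And>i. i \<in> I \<Longrightarrow> e i \<le> N"
  shows "sin_poly_quot a r p N t phi + (\<Sum>i\<in>I. c i * sin_poly_quot a r (q i) (e i) t phi)
       = sin_poly_quot a r (p + (\<Sum>i\<in>I. smult (c i) (q i * gamma_poly a r ^ (N - e i)))) N t phi"
proof -
  have "c i * sin_poly_quot a r (q i) (e i) t phi
      = sin t * poly (smult (c i) (q i * gamma_poly a r ^ (N - e i))) (cos t) / anchor_gamma a r t ^ N"
    if "i \<in> I" for i
    using assms(1) by (simp add: sin_poly_quot_def power_diff[OF _ assms(2)[OF that]] field_simps)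
  then have "(\<Sum>i\<in>I. c i * sin_poly_quot a r (q i) (e i) t phi)
      = sin t * poly (\<Sum>i\<in>I. smult (c i) (q i * gamma_poly a r ^ (N - e i))) (cos t) / anchor_gamma a r t ^ N"
    by (simp add: poly_sum sum_distrib_left sum_divide_distrib)
  then show ?thesis
    by (simp add: sin_poly_quot_def add_divide_distrib distrib_left)
qed

lemma sin_poly_quot_eq_0_imp_eq_0:
  assumes "\<bar>r\<bar> < a" and "\<And>t. sin_poly_quot a r p n t phi = 0"
  shows "p = 0"
proof (rule ccontr)
  assume "p \<noteq> 0"
  have "poly p x = 0" if x: "x \<in> {-1<..<1}" for x
  proof -
    have "sin (arccos x) \<noteq> 0"
      using x by (simp add: sin_arccos_nonzero)
    moreover have "anchor_gamma a r (arccos x) \<noteq> 0"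
      using anchor_gamma_pos[OF assms(1)] by (metis less_irrefl)
    moreover have "cos (arccos x) = x"
      using x by (simp add: cos_arccos)
    ultimately show ?thesis
      using assms(2)[of "arccos x"] by (simp add: sin_poly_quot_def)
  qed
  then have "{-1<..<1::real} \<subseteq> {x. poly p x = 0}"
    by blast
  with poly_roots_finite[OF \<open>p \<noteq> 0\<close>] have "finite {-1<..<1::real}"
    by (rule finite_subset[rotated])
  then show False
    using infinite_Ioo[of "-1" "1::real"] by simp
qed

lemma poly_add_sum_gamma_power_at_root:
  assumes "r \<noteq> 0" and "\<And>i. i \<in> I \<Longrightarrow> k i > 0"
  shows "poly (p + (\<Sum>i\<in>I. smult (c i) (q i * gamma_poly a r ^ k i))) (- a / r) = poly p (- a / r)"
proof -
  have "poly (gamma_poly a r) (- a / r) = 0"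
    using assms(1) by (simp add: poly_gamma_poly)
  then have "poly (\<Sum>i\<in>I. smult (c i) (q i * gamma_poly a r ^ k i)) (- a / r) = 0"
    unfolding poly_sum using assms(2) by (intro sum.neutral) auto
  then show ?thesis
    by simp
qed

lemma anchor_lapV_gauss_combination_nth_3:
  assumes "\<bar>r\<bar> < a"
  shows "(((anchor_lapV a r ^^ m) anchor_gauss) t phi
            + (\<Sum>i = 1..m. c i *\<^sub>R ((anchor_lapV a r ^^ (m - i)) anchor_gauss) t phi)) $ 3
       = sin_poly_quot a r (gauss_poly a r m
            + (\<Sum>i = 1..m. smult (c i) (gauss_poly a r (m - i) * gamma_poly a r ^ ((2 * m - 1) - (2 * (m - i) - 1)))))
           (2 * m - 1) t phi"
proof -
  have "(((anchor_lapV a r ^^ m) anchor_gauss) t phi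
            + (\<Sum>i = 1..m. c i *\<^sub>R ((anchor_lapV a r ^^ (m - i)) anchor_gauss) t phi)) $ 3
      = sin_poly_quot a r (gauss_poly a r m) (2 * m - 1) t phi
          + (\<Sum>i = 1..m. c i * sin_poly_quot a r (gauss_poly a r (m - i)) (2 * (m - i) - 1) t phi)"
    by (simp add: anchor_lapV_iterate_gauss_nth_3[OF assms])
  also have "\<dots> = sin_poly_quot a r (gauss_poly a r m
            + (\<Sum>i = 1..m. smult (c i) (gauss_poly a r (m - i) * gamma_poly a r ^ ((2 * m - 1) - (2 * (m - i) - 1)))))
           (2 * m - 1) t phi"
    by (rule sin_poly_quot_add_sum) (use anchor_gamma_pos[OF assms, of t] in auto)
  finally show ?thesis .
qed

theorem theorem1:
  fixes a r :: real
  assumes "a > r" and "r > 0"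
  shows "\<not> (\<exists>m::nat. m \<ge> 1 \<and> (\<exists>c :: nat \<Rightarrow> real.
           \<forall>t phi. ((anchor_lapV a r ^^ m) anchor_gauss) t phi
               + (\<Sum>i = 1..m. c i *\<^sub>R ((anchor_lapV a r ^^ (m - i)) anchor_gauss) t phi) = 0))"
proof
  assume "\<exists>m::nat. m \<ge> 1 \<and> (\<exists>c :: nat \<Rightarrow> real.
           \<forall>t phi. ((anchor_lapV a r ^^ m) anchor_gauss) t phi
               + (\<Sum>i = 1..m. c i *\<^sub>R ((anchor_lapV a r ^^ (m - i)) anchor_gauss) t phi) = 0)"
  then obtain m c where "m \<ge> 1" and relation: "\<And>t phi. ((anchor_lapV a r ^^ m) anchor_gauss) t phi
               + (\<Sum>i = 1..m. c i *\<^sub>R ((anchor_lapV a r ^^ (m - i)) anchor_gauss) t phi) = 0"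
    by blast
  have r_a: "\<bar>r\<bar> < a" and "r \<noteq> 0"
    using assms by simp_all
  define P where "P = gauss_poly a r m
    + (\<Sum>i = 1..m. smult (c i) (gauss_poly a r (m - i) * gamma_poly a r ^ ((2 * m - 1) - (2 * (m - i) - 1))))"
  have "sin_poly_quot a r P (2 * m - 1) t 0 = 0" for t
    using anchor_lapV_gauss_combination_nth_3[OF r_a, of m t 0 c] unfolding relation P_def by simp
  then have "P = 0"
    by (rule sin_poly_quot_eq_0_imp_eq_0[OF r_a])
  moreover have "poly P (- a / r) = poly (gauss_poly a r m) (- a / r)"
    unfolding P_def by (rule poly_add_sum_gamma_power_at_root[OF \<open>r \<noteq> 0\<close>]) (use \<open>m \<ge> 1\<close> in auto)
  ultimately show False
    using poly_gauss_poly_at_gamma_root[OF r_a \<open>r \<noteq> 0\<close>] by simp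
qed

end
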